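(* Let $W\in\{\mathrm{A}_{\frac12\infty},\mathrm{D}_{\frac12\infty}\}$ and $\lambda\in\mathbb{C}$, and set $\check H_{W,\lambda}=\{\xi\in\check H_{W,\mathbb{C}}:\dot I_W(\xi)=\lambda\xi\}$, $\overline H_{W,\lambda}=\check H_{W,\lambda}\cap\overline H_{W,\mathbb{C}}$. Then $\dim_{\mathbb{C}}\check H_{W,\lambda}=1$ and $\dim_{\mathbb{C}}\overline H_{W,\lambda}=0$, except in the case $W=\mathrm{D}_{\frac12\infty}$, $\lambda=2$, where $\dim_{\mathbb{C}}\check H_{W,2}=2$, $\dim_{\mathbb{C}}\overline H_{W,2}=1$, and $\overline H_{W,2}$ is spanned by $\gamma_{c_0^+}-\gamma_{c_0^-}$.
   Context: Index sets: $C_{W,0}=\{c_0^{(n)}:n\ge1\}$ (type $\mathrm{A}_{\frac12\infty}$) or $\{c_0^{(n)}:n\ge1\}\cup\{c_0^+,c_0^-\}$ (type $\mathrm{D}_{\frac12\infty}$); $C_{W,1}=\{c_1^{(n)}:n\ge1\}$; $C_W=C_{W,0}\sqcup C_{W,1}$. Adjacency: $c_0^{(n)}$ is adjacent to $c_1^{(n)}$ and $c_1^{(n+1)}$ ($n\ge1$); in type D, $c_0^\pm$ are adjacent to $c_1^{(1)}$; no others. $\overline H_{W,\mathbb{C}}$ is the Hilbert space $\ell^2(C_W)$ with orthonormal basis $\{\gamma_c\}$, and $\check H_{W,\mathbb{C}}=\prod_{c\in C_W}\mathbb{C}\gamma_c$ is the space of all formal sums $\sum a_c\gamma_c$. $I_W$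 is the symmetric form with $I_W(\gamma_c,\gamma_c)=2$, $I_W(\gamma_c,\gamma_{c'})=-1$ if $c,c'$ adjacent, $0$ otherwise (i.e. $I_W=J_W+{}^tJ_W$, the intersection form for suspension dimension $d\equiv0\bmod 4$), and $\dot I_W(\xi)=\sum_{c}I_W(\xi,\gamma_c)\gamma_c$, which is well defined on $\check H_{W,\mathbb{C}}$ since each index has finitely many neighbours. *)

theory Defs
  imports "HOL-Analysis.Analysis" "HOL-Library.Function_Algebras"
begin

datatype wtype = A_half_inf | D_half_inf

text \<open>Indices: c0 n = c_0^{(n)}, c1 n = c_1^{(n)} (meaningful for n >= 1),
  c0p = c_0^+, c0m = c_0^-.\<close>
datatype cidx = c0 nat | c1 nat | c0p | c0m

definition CW0 :: "wtype \<Rightarrow> cidx set" where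
  "CW0 W = {c0 n | n. n \<ge> 1} \<union> (if W = D_half_inf then {c0p, c0m} else {})"

definition CW1 :: "wtype \<Rightarrow> cidx set" where
  "CW1 W = {c1 n | n. n \<ge> 1}"

definition CW :: "wtype \<Rightarrow> cidx set" where
  "CW W = CW0 W \<union> CW1 W"

definition adj0 :: "wtype \<Rightarrow> cidx \<Rightarrow> cidx \<Rightarrow> bool" where
  "adj0 W x y \<longleftrightarrow>
     (\<exists>n\<ge>1. x = c0 n \<and> (y = c1 n \<or> y = c1 (n + 1)))
     \<or> (W = D_half_inf \<and> (x = c0p \<or> x = c0m) \<and> y = c1 1)"

definition adjacent :: "wtype \<Rightarrow> cidx \<Rightarrow> cidx \<Rightarrow> bool" where
  "adjacent W x y \<longleftrightarrow> adj0 W x y \<or> adj0 W y x"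

definition neighbours :: "wtype \<Rightarrow> cidx \<Rightarrow> cidx set" where
  "neighbours W c = {c'. adjacent W c c'}"

text \<open>Formal sums sum_{c in C_W} a_c gamma_c, represented by their coefficient functions
  (zero outside C_W).\<close>
definition Hcheck :: "wtype \<Rightarrow> (cidx \<Rightarrow> complex) set" where
  "Hcheck W = {\<xi>. \<forall>c. c \<notin> CW W \<longrightarrow> \<xi> c = 0}"

definition Hbar :: "wtype \<Rightarrow> (cidx \<Rightarrow> complex) set" where
  "Hbar W = {\<xi> \<in> Hcheck W. (\<lambda>c. (cmod (\<xi> c))\<^sup>2) summable_on CW W}"

definition gamma :: "cidx \<Rightarrow> (cidx \<Rightarrow> complex)" where
  "gamma c = (\<lambda>c'. if c' = c then 1 else 0)"

definition IW :: "wtype \<Rightarrow> cidx \<Rightarrow> cidx \<Rightarrow> complex" where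
  "IW W c c' = (if c = c' then 2 else if adjacent W c c' then -1 else 0)"

text \<open>dot I_W(xi) = sum_c I_W(xi, gamma_c) gamma_c, where
  I_W(xi, gamma_c) = sum_{c'} xi_{c'} I_W(gamma_{c'}, gamma_c) is a finite sum over
  c and its neighbours.\<close>
definition Idot :: "wtype \<Rightarrow> (cidx \<Rightarrow> complex) \<Rightarrow> (cidx \<Rightarrow> complex)" where
  "Idot W \<xi> = (\<lambda>c. if c \<in> CW W
      then (\<Sum>c' \<in> insert c (neighbours W c). \<xi> c' * IW W c' c) else 0)"

definition cscale :: "complex \<Rightarrow> (cidx \<Rightarrow> complex) \<Rightarrow> (cidx \<Rightarrow> complex)" where
  "cscale a f = (\<lambda>x. a * f x)"

definition Hcheck_eig :: "wtype \<Rightarrow> complex \<Rightarrow> (cidx \<Rightarrow> complex) set" where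
  "Hcheck_eig W l = {\<xi> \<in> Hcheck W. Idot W \<xi> = cscale l \<xi>}"

definition Hbar_eig :: "wtype \<Rightarrow> complex \<Rightarrow> (cidx \<Rightarrow> complex) set" where
  "Hbar_eig W l = Hcheck_eig W l \<inter> Hbar W"

definition cdim :: "(cidx \<Rightarrow> complex) set \<Rightarrow> nat" where
  "cdim S = vector_space.dim cscale S"

definition cspan :: "(cidx \<Rightarrow> complex) set \<Rightarrow> (cidx \<Rightarrow> complex) set" where
  "cspan S = module.span cscale S"

end

theory Submission
  imports Defs
begin

text \<open>
  Along the chain c1(1), c0(1), c1(2), c0(2), \<dots> the eigen-equation \<open>I\<^sub>W \<xi> = \<lambda> \<xi>\<close>
  is the recurrence \<open>y (k + 2) = (2 - \<lambda>) y (k + 1) - y k\<close>, where the branch vertices enter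
  through \<open>y 0 = \<xi> c0p + \<xi> c0m\<close> in type D (and \<open>y 0 = 0\<close> in type A), while the
  equations at c0p and c0m add the constraints \<open>(2 - \<lambda>) \<xi> c0p = (2 - \<lambda>) \<xi> c0m = \<xi> (c1 1)\<close>.
  So a formal eigenvector is determined by its values at c0p, c0m, c1(1) subject to these
  constraints, which leave one free parameter, or two when \<open>\<lambda> = 2\<close> in type D.

  A square-summable eigenvector has \<open>y \<longlonglongrightarrow> 0\<close>, so its Wronskian
  \<open>y k * y (k + 2) - y (k + 1)\<^sup>2\<close>, which is constant, vanishes. With the initial conditions
  this forces \<open>y = 0\<close>; what survives is supported on {c0p, c0m}, which only happens for
  \<open>\<gamma> c0p - \<gamma> c0m\<close> in type D with \<open>\<lambda> = 2\<close>.
\<close>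

interpretation V: vector_space cscale
  by unfold_locales (auto simp: cscale_def fun_eq_iff algebra_simps)

lemma cdim_cspan_independent:
  assumes "V.independent S" and "finite S"
  shows "cdim (cspan S) = card S"
  using assms by (simp add: cdim_def cspan_def V.dim_span V.dim_eq_card_independent)

lemma cspan_singleton: "cspan {v} = range (\<lambda>t. cscale t v)"
  by (simp add: cspan_def V.span_singleton)

lemma cspan_pair: "cspan {u, w} = {cscale s u + cscale t w | s t. True}"
proof -
  have "x - cscale s u = cscale t w \<longleftrightarrow> x = cscale s u + cscale t w" for x s t
    by (auto simp: algebra_simps)
  then show ?thesis
    by (auto simp: cspan_def V.span_insert V.span_singleton)
qed

fun lin_rec :: "'a::comm_ring \<Rightarrow> 'a \<Rightarrow> 'a \<Rightarrow> nat \<Rightarrow> 'a" where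
  "lin_rec \<mu> a b 0 = a"
| "lin_rec \<mu> a b (Suc 0) = b"
| "lin_rec \<mu> a b (Suc (Suc k)) = \<mu> * lin_rec \<mu> a b (Suc k) - lin_rec \<mu> a b k"

lemma lin_rec_unique:
  assumes "\<And>k. y (Suc (Suc k)) = \<mu> * y (Suc k) - y k"
  shows "y k = lin_rec \<mu> (y 0) (y 1) k"
proof -
  have "y k = lin_rec \<mu> (y 0) (y 1) k \<and> y (Suc k) = lin_rec \<mu> (y 0) (y 1) (Suc k)"
    by (induction k) (simp_all add: assms)
  then show ?thesis ..
qed

lemma lin_rec_scale: "lin_rec \<mu> (t * a) (t * b) k = t * lin_rec \<mu> a b k"
  by (induction \<mu> a b k rule: lin_rec.induct) (simp_all add: algebra_simps)

lemma lin_rec_add: "lin_rec \<mu> (a + a') (b + b') k = lin_rec \<mu> a b k + lin_rec \<mu> a' b' k"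
  by (induction \<mu> a b k rule: lin_rec.induct) (simp_all add: algebra_simps)

lemma lin_rec_zero [simp]: "lin_rec \<mu> 0 0 k = 0"
  using lin_rec_scale[of \<mu> 0 0 0 k] by simp

lemma recurrence_wronskian_zero:
  fixes y :: "nat \<Rightarrow> 'a::real_normed_field"
  assumes rec: "\<And>k. y (Suc (Suc k)) = \<mu> * y (Suc k) - y k" and "y \<longlonglongrightarrow> 0"
  shows "y 0 * y 2 = (y 1)\<^sup>2"
proof -
  define w where "w k = y k * y (Suc (Suc k)) - (y (Suc k))\<^sup>2" for k
  have "w (Suc k) = w k" for k
    unfolding w_def rec[of "Suc k"] rec[of k] by (simp add: power2_eq_square algebra_simps)
  then have "w k = w 0" for k
    by (induction k) simp_all
  then have const: "w = (\<lambda>_. w 0)" ..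
  have "w \<longlonglongrightarrow> 0 * 0 - 0\<^sup>2"
    unfolding w_def using assms(2) by (intro tendsto_intros LIMSEQ_Suc)
  then have "w 0 = 0"
    by (subst (asm) const) (simp add: LIMSEQ_const_iff)
  then show ?thesis
    by (simp add: w_def numeral_2_eq_2)
qed

lemma recurrence_geometric:
  fixes y :: "nat \<Rightarrow> 'a::comm_ring_1"
  assumes rec: "\<And>k. y (Suc (Suc k)) = \<mu> * y (Suc k) - y k"
    and "y 1 = r * y 0" and root: "r\<^sup>2 + 1 = \<mu> * r"
  shows "y k = r ^ k * y 0"
proof -
  have "y k = r ^ k * y 0 \<and> y (Suc k) = r ^ Suc k * y 0"
  proof (induction k)
    case 0
    then show ?case using assms(2) by simp
  next
    case (Suc k)
    have "y (Suc (Suc k)) = r ^ k * y 0 * (\<mu> * r - 1)"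
      using Suc by (simp add: rec algebra_simps)
    also have "\<dots> = r ^ Suc (Suc k) * y 0"
      by (simp flip: root add: power2_eq_square algebra_simps)
    finally show ?case using Suc by simp
  qed
  then show ?thesis ..
qed

text \<open>The vanishing Wronskian gives \<open>(y 0)\<^sup>2 (\<mu>\<^sup>2 - 4) = 0\<close>; if \<open>\<mu>\<^sup>2 = 4\<close>, then \<open>y\<close> is
  geometric with ratio \<open>\<mu> / 2 = \<plusminus>1\<close> and cannot decay unless \<open>y 0 = 0\<close>.\<close>

lemma decaying_solution_start_zero:
  fixes y :: "nat \<Rightarrow> 'a::real_normed_field"
  assumes rec: "\<And>k. y (Suc (Suc k)) = \<mu> * y (Suc k) - y k"
    and lim: "y \<longlonglongrightarrow> 0" and start: "2 * y 1 = \<mu> * y 0"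
  shows "y 0 = 0"
proof (rule ccontr)
  assume nz: "y 0 \<noteq> 0"
  have y1: "y 1 = \<mu> / 2 * y 0"
    using start by (simp add: field_simps)
  have "y 0 * (\<mu> * y 1 - y 0) = (y 1)\<^sup>2"
    using recurrence_wronskian_zero[OF rec lim] rec[of 0] by (simp add: numeral_2_eq_2)
  then have "(y 0)\<^sup>2 * (\<mu>\<^sup>2 - 4) = 0"
    unfolding y1 by (simp add: field_simps power2_eq_square)
  with nz have "(\<mu> / 2)\<^sup>2 = 1"
    by (simp add: power_divide)
  then have r: "(\<mu> / 2)\<^sup>2 + 1 = \<mu> * (\<mu> / 2)"
    by (simp add: power2_eq_square field_simps)
  have "\<mu> / 2 = 1 \<or> \<mu> / 2 = -1"
    using \<open>(\<mu> / 2)\<^sup>2 = 1\<close> by (simp only: power2_eq_1_iff)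
  then have "norm (\<mu> / 2) = 1"
    by (elim disjE) (simp_all only: norm_one norm_minus_cancel)
  have "norm (y k) = norm (y 0)" for k
    using recurrence_geometric[OF rec y1 r, of k] \<open>norm (\<mu> / 2) = 1\<close> by (simp add: norm_mult norm_power)
  then have "(\<lambda>k. norm (y k)) = (\<lambda>_. norm (y 0))" ..
  moreover have "(\<lambda>k. norm (y k)) \<longlonglongrightarrow> 0"
    using lim by (simp add: tendsto_norm_zero_iff)
  ultimately show False
    using nz by (simp add: LIMSEQ_const_iff)
qed

lemma CW_simps [simp]:
  "c0 m \<in> CW W \<longleftrightarrow> m \<ge> 1" "c1 m \<in> CW W \<longleftrightarrow> m \<ge> 1"
  "c0p \<in> CW W \<longleftrightarrow> W = D_half_inf" "c0m \<in> CW W \<longleftrightarrow> W = D_half_inf"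
  by (auto simp: CW_def CW0_def CW1_def)

lemma neighbours_simps:
  "neighbours W (c0 n) = (if n \<ge> 1 then {c1 n, c1 (Suc n)} else {})"
  "neighbours W (c1 n) = (if n \<ge> 1 then {c0 n} else {}) \<union> (if n \<ge> 2 then {c0 (n - 1)} else {})
     \<union> (if W = D_half_inf \<and> n = 1 then {c0p, c0m} else {})"
  "neighbours W c0p = (if W = D_half_inf then {c1 1} else {})"
  "neighbours W c0m = (if W = D_half_inf then {c1 1} else {})"
  by (auto simp: neighbours_def adjacent_def adj0_def)

lemma adjacent_simps [simp]:
  "adjacent W (c0 n) (c1 m) \<longleftrightarrow> n \<ge> 1 \<and> (m = n \<or> m = Suc n)"
  "adjacent W (c1 m) (c0 n) \<longleftrightarrow> n \<ge> 1 \<and> (m = n \<or> m = Suc n)"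
  "adjacent W c0p (c1 m) \<longleftrightarrow> W = D_half_inf \<and> m = 1"
  "adjacent W c0m (c1 m) \<longleftrightarrow> W = D_half_inf \<and> m = 1"
  "adjacent W (c1 m) c0p \<longleftrightarrow> W = D_half_inf \<and> m = 1"
  "adjacent W (c1 m) c0m \<longleftrightarrow> W = D_half_inf \<and> m = 1"
  by (auto simp: adjacent_def adj0_def)

lemma Idot_c0:
  "m \<ge> 1 \<Longrightarrow> Idot W \<xi> (c0 m) = 2 * \<xi> (c0 m) - \<xi> (c1 m) - \<xi> (c1 (Suc m))"
  by (simp add: Idot_def neighbours_simps IW_def)

lemma Idot_c1:
  "m \<ge> 1 \<Longrightarrow> Idot W \<xi> (c1 m) = 2 * \<xi> (c1 m) - \<xi> (c0 m)
     - (if m \<ge> 2 then \<xi> (c0 (m - 1)) else 0)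
     - (if W = D_half_inf \<and> m = 1 then \<xi> c0p + \<xi> c0m else 0)"
  by (cases "m = 1"; cases W) (simp_all add: Idot_def neighbours_simps IW_def)

lemma Idot_c0p: "Idot W \<xi> c0p = (if W = D_half_inf then 2 * \<xi> c0p - \<xi> (c1 1) else 0)"
  and Idot_c0m: "Idot W \<xi> c0m = (if W = D_half_inf then 2 * \<xi> c0m - \<xi> (c1 1) else 0)"
  by (simp_all add: Idot_def neighbours_simps IW_def)

definition chain_vertex :: "nat \<Rightarrow> cidx" where
  "chain_vertex k = (if even k then c0 (k div 2) else c1 (Suc k div 2))"

lemma chain_vertex_even [simp]: "chain_vertex (2 * m) = c0 m"
  and chain_vertex_odd [simp]: "chain_vertex (Suc (2 * m)) = c1 (Suc m)"
  by (simp_all add: chain_vertex_def)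

lemma inj_chain_vertex: "inj chain_vertex"
  by (rule injI) (auto simp: chain_vertex_def split: if_splits elim!: evenE oddE)

lemma CW_eq_chain_vertices:
  "CW W = range (chain_vertex \<circ> Suc) \<union> (if W = D_half_inf then {c0p, c0m} else {})"
proof (intro set_eqI iffI)
  fix c assume "c \<in> CW W"
  then show "c \<in> range (chain_vertex \<circ> Suc) \<union> (if W = D_half_inf then {c0p, c0m} else {})"
  proof (cases c)
    case (c0 n)
    with \<open>c \<in> CW W\<close> obtain m where "n = Suc m" by (auto dest: Suc_le_D)
    then have "c = (chain_vertex \<circ> Suc) (Suc (2 * m))"
      using c0 chain_vertex_even[of "Suc m"] by simp
    then show ?thesis by blast
  next
    case (c1 n)
    with \<open>c \<in> CW W\<close> obtain m where "n = Suc m" by (auto dest: Suc_le_D)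
    then have "c = (chain_vertex \<circ> Suc) (2 * m)"
      using c1 by simp
    then show ?thesis by blast
  qed (use \<open>c \<in> CW W\<close> in auto)
next
  fix c assume "c \<in> range (chain_vertex \<circ> Suc) \<union> (if W = D_half_inf then {c0p, c0m} else {})"
  then show "c \<in> CW W"
    by (auto simp: chain_vertex_def split: if_splits)
qed

lemma CW_cases:
  obtains (chain) k where "c = chain_vertex (Suc k)"
  | (branch) "W = D_half_inf" "c = c0p \<or> c = c0m"
  | (outside) "c \<notin> CW W"
  using CW_eq_chain_vertices[of W] by (cases "c \<in> CW W") (auto split: if_splits)

text \<open>Position 0 is a virtual vertex c0(0) carrying the combined value of the branch vertices,
  so that the eigen-equation at c1(1) has the same shape as at every other chain vertex.\<close>

definition chain_seq :: "wtype \<Rightarrow> (cidx \<Rightarrow> complex) \<Rightarrow> nat \<Rightarrow> complex" where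
  "chain_seq W \<xi> k =
     (if k = 0 then (if W = D_half_inf then \<xi> c0p + \<xi> c0m else 0) else \<xi> (chain_vertex k))"

lemma chain_seq_Suc [simp]: "chain_seq W \<xi> (Suc k) = \<xi> (chain_vertex (Suc k))"
  by (simp add: chain_seq_def)

lemma Idot_chain:
  "Idot W \<xi> (chain_vertex (Suc k)) =
     2 * chain_seq W \<xi> (Suc k) - chain_seq W \<xi> k - chain_seq W \<xi> (Suc (Suc k))"
proof (cases "even k")
  case True
  then obtain m where k: "k = 2 * m" by (auto elim: evenE)
  have "chain_vertex (Suc k) = c1 (Suc m)" "chain_vertex (Suc (Suc k)) = c0 (Suc m)"
    using k chain_vertex_even[of "Suc m"] by simp_all
  then show ?thesis
    using k by (cases "m = 0") (auto simp: Idot_c1 chain_seq_def)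
next
  case False
  then obtain m where k: "k = Suc (2 * m)" by (auto elim: oddE)
  have "chain_vertex (Suc k) = c0 (Suc m)"
    using k chain_vertex_even[of "Suc m"] by simp
  moreover have "Suc (Suc k) = Suc (2 * Suc m)"
    using k by simp
  ultimately show ?thesis
    using k by (simp only: chain_seq_Suc chain_vertex_odd Idot_c0)
qed

lemma Hcheck_eig_iff:
  "\<xi> \<in> Hcheck_eig W l \<longleftrightarrow> \<xi> \<in> Hcheck W
     \<and> (\<forall>k. chain_seq W \<xi> (Suc (Suc k)) = (2 - l) * chain_seq W \<xi> (Suc k) - chain_seq W \<xi> k)
     \<and> (W = D_half_inf \<longrightarrow> (2 - l) * \<xi> c0p = \<xi> (c1 1) \<and> (2 - l) * \<xi> c0m = \<xi> (c1 1))"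
proof (cases "\<xi> \<in> Hcheck W")
  case True
  then have "Idot W \<xi> = cscale l \<xi> \<longleftrightarrow> (\<forall>c \<in> CW W. Idot W \<xi> c = l * \<xi> c)"
    by (auto simp: fun_eq_iff cscale_def Idot_def Hcheck_def)
  also have "\<dots> \<longleftrightarrow> (\<forall>k. Idot W \<xi> (chain_vertex (Suc k)) = l * \<xi> (chain_vertex (Suc k)))
      \<and> (W = D_half_inf \<longrightarrow> Idot W \<xi> c0p = l * \<xi> c0p \<and> Idot W \<xi> c0m = l * \<xi> c0m)"
    by (auto simp: CW_eq_chain_vertices)
  also have "\<dots> \<longleftrightarrow>
      (\<forall>k. chain_seq W \<xi> (Suc (Suc k)) = (2 - l) * chain_seq W \<xi> (Suc k) - chain_seq W \<xi> k)
      \<and> (W = D_half_inf \<longrightarrow> (2 - l) * \<xi> c0p = \<xi> (c1 1) \<and> (2 - l) * \<xi> c0m = \<xi> (c1 1))"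
    unfolding Idot_chain Idot_c0p Idot_c0m chain_seq_Suc[symmetric]
    by (auto simp: algebra_simps)
  finally show ?thesis
    using True by (simp add: Hcheck_eig_def)
qed (simp add: Hcheck_eig_def)

definition eigvec :: "wtype \<Rightarrow> complex \<Rightarrow> complex \<Rightarrow> complex \<Rightarrow> complex \<Rightarrow> cidx \<Rightarrow> complex" where
  "eigvec W \<mu> a b x = (\<lambda>c. case c of
      c0 m \<Rightarrow> if m \<ge> 1 then lin_rec \<mu> (a + b) x (2 * m) else 0
    | c1 m \<Rightarrow> if m \<ge> 1 then lin_rec \<mu> (a + b) x (2 * m - 1) else 0
    | c0p \<Rightarrow> if W = D_half_inf then a else 0
    | c0m \<Rightarrow> if W = D_half_inf then b else 0)"

lemma eigvec_in_Hcheck: "eigvec W \<mu> a b x \<in> Hcheck W"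
  unfolding Hcheck_def
proof (intro CollectI allI impI)
  fix c assume "c \<notin> CW W"
  then show "eigvec W \<mu> a b x c = 0"
    by (cases c) (auto simp: eigvec_def)
qed

lemma eigvec_chain_vertex: "eigvec W \<mu> a b x (chain_vertex (Suc k)) = lin_rec \<mu> (a + b) x (Suc k)"
proof (cases "even k")
  case True
  then obtain m where "k = 2 * m" by (auto elim: evenE)
  then show ?thesis by (simp add: eigvec_def)
next
  case False
  then obtain m where "Suc k = 2 * Suc m" by (auto elim: oddE)
  then show ?thesis by (simp only: chain_vertex_even) (simp add: eigvec_def)
qed

lemma chain_seq_eigvec:
  assumes "W = A_half_inf \<longrightarrow> a = 0 \<and> b = 0"
  shows "chain_seq W (eigvec W \<mu> a b x) = lin_rec \<mu> (a + b) x"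
proof (rule ext)
  fix k
  show "chain_seq W (eigvec W \<mu> a b x) k = lin_rec \<mu> (a + b) x k"
  proof (cases k)
    case 0
    then show ?thesis
      using assms by (cases W) (simp_all add: chain_seq_def eigvec_def)
  qed (simp add: eigvec_chain_vertex)
qed

lemma eq_eigvec_of_chain_seq:
  assumes "\<xi> \<in> Hcheck W"
    and "\<And>k. chain_seq W \<xi> k = lin_rec \<mu> (\<xi> c0p + \<xi> c0m) (\<xi> (c1 1)) k"
  shows "\<xi> = eigvec W \<mu> (\<xi> c0p) (\<xi> c0m) (\<xi> (c1 1))"
proof
  fix c
  show "\<xi> c = eigvec W \<mu> (\<xi> c0p) (\<xi> c0m) (\<xi> (c1 1)) c"
  proof (cases c rule: CW_cases[where W = W])
    case (chain k)
    then show ?thesis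
      using assms(2)[of "Suc k"] by (simp add: eigvec_chain_vertex)
  next
    case branch
    then show ?thesis by (auto simp: eigvec_def)
  next
    case outside
    then show ?thesis
      using assms(1) eigvec_in_Hcheck by (simp add: Hcheck_def)
  qed
qed

lemma Hcheck_eig_eq_eigvecs:
  "Hcheck_eig W l = {eigvec W (2 - l) a b x | a b x.
     (W = A_half_inf \<longrightarrow> a = 0 \<and> b = 0) \<and> (W = D_half_inf \<longrightarrow> (2 - l) * a = x \<and> (2 - l) * b = x)}"
    (is "_ = {eigvec W ?\<mu> a b x | a b x. ?bd a b x}")
proof (intro set_eqI iffI)
  fix \<xi> assume "\<xi> \<in> Hcheck_eig W l"
  then have H: "\<xi> \<in> Hcheck W"
    and rec: "\<And>k. chain_seq W \<xi> (Suc (Suc k)) = ?\<mu> * chain_seq W \<xi> (Suc k) - chain_seq W \<xi> k"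
    and D: "W = D_half_inf \<longrightarrow> ?\<mu> * \<xi> c0p = \<xi> (c1 1) \<and> ?\<mu> * \<xi> c0m = \<xi> (c1 1)"
    unfolding Hcheck_eig_iff by blast+
  have A: "W = A_half_inf \<longrightarrow> \<xi> c0p = 0 \<and> \<xi> c0m = 0"
    using H by (auto simp: Hcheck_def)
  have s0: "chain_seq W \<xi> 0 = \<xi> c0p + \<xi> c0m"
    using A by (cases W) (simp_all add: chain_seq_def)
  have s1: "chain_seq W \<xi> 1 = \<xi> (c1 1)"
    using chain_vertex_odd[of 0] by simp
  have "\<xi> = eigvec W ?\<mu> (\<xi> c0p) (\<xi> c0m) (\<xi> (c1 1))"
    using lin_rec_unique[where y = "chain_seq W \<xi>", OF rec] unfolding s0 s1
    by (rule eq_eigvec_of_chain_seq[OF H])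
  with A D show "\<xi> \<in> {eigvec W ?\<mu> a b x | a b x. ?bd a b x}"
    by blast
next
  fix \<xi> assume "\<xi> \<in> {eigvec W ?\<mu> a b x | a b x. ?bd a b x}"
  then obtain a b x where \<xi>: "\<xi> = eigvec W ?\<mu> a b x" and bd: "?bd a b x"
    by blast
  have "\<xi> \<in> Hcheck W"
    unfolding \<xi> by (rule eigvec_in_Hcheck)
  moreover have "chain_seq W \<xi> k = lin_rec ?\<mu> (a + b) x k" for k
    unfolding \<xi> using bd by (simp add: chain_seq_eigvec)
  moreover have "W = D_half_inf \<Longrightarrow> \<xi> c0p = a \<and> \<xi> c0m = b" "\<xi> (c1 1) = x"
    by (simp_all add: \<xi> eigvec_def)
  ultimately show "\<xi> \<in> Hcheck_eig W l"
    unfolding Hcheck_eig_iff using bd by (simp del: chain_seq_Suc)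
qed

lemma eigvec_scale: "cscale t (eigvec W \<mu> a b x) = eigvec W \<mu> (t * a) (t * b) (t * x)"
proof -
  have "t * a + t * b = t * (a + b)"
    by (simp add: algebra_simps)
  then show ?thesis
    by (auto simp: fun_eq_iff cscale_def eigvec_def lin_rec_scale split: cidx.split)
qed

lemma eigvec_add: "eigvec W \<mu> a b x + eigvec W \<mu> a' b' x' = eigvec W \<mu> (a + a') (b + b') (x + x')"
  by (auto simp: fun_eq_iff eigvec_def lin_rec_add[symmetric] add_ac split: cidx.split)

lemma eigvec_zero [simp]: "eigvec W \<mu> 0 0 0 = 0"
  using eigvec_scale[of 0 W \<mu> 0 0 0] by (simp add: cscale_def fun_eq_iff)

lemma eigvec_branch: "eigvec D_half_inf 0 a (- a) 0 = cscale a (gamma c0p - gamma c0m)"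
  by (auto simp: fun_eq_iff cscale_def gamma_def eigvec_def split: cidx.split)

lemma Hcheck_eig_A: "Hcheck_eig A_half_inf l = cspan {eigvec A_half_inf (2 - l) 0 0 1}"
  unfolding Hcheck_eig_eq_eigvecs cspan_singleton eigvec_scale by auto

lemma Hcheck_eig_D:
  assumes "l \<noteq> 2"
  shows "Hcheck_eig D_half_inf l = cspan {eigvec D_half_inf (2 - l) (1 / (2 - l)) (1 / (2 - l)) 1}"
proof -
  have "2 - l \<noteq> 0"
    using assms by simp
  then have "(2 - l) * a = x \<and> (2 - l) * b = x \<longleftrightarrow> a = x / (2 - l) \<and> b = x / (2 - l)" for a b x
    by (auto simp: field_simps)
  then show ?thesis
    unfolding Hcheck_eig_eq_eigvecs cspan_singleton eigvec_scale by auto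
qed

lemma Hcheck_eig_D_2:
  "Hcheck_eig D_half_inf 2 = cspan {eigvec D_half_inf 0 1 0 0, eigvec D_half_inf 0 0 1 0}"
  unfolding Hcheck_eig_eq_eigvecs cspan_pair eigvec_scale eigvec_add by auto

lemma Hbar_chain_seq_tendsto_zero:
  assumes "\<xi> \<in> Hbar W"
  shows "chain_seq W \<xi> \<longlonglongrightarrow> 0"
proof -
  let ?f = "\<lambda>c. (norm (\<xi> c))\<^sup>2"
  have "?f summable_on CW W"
    using assms by (simp add: Hbar_def)
  moreover have "range (chain_vertex \<circ> Suc) \<subseteq> CW W"
    by (simp add: CW_eq_chain_vertices)
  ultimately have "?f summable_on range (chain_vertex \<circ> Suc)"
    by (rule summable_on_subset_banach)
  moreover have "inj (chain_vertex \<circ> Suc)"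
    using inj_chain_vertex by (simp add: inj_compose)
  ultimately have "(?f \<circ> (chain_vertex \<circ> Suc)) summable_on UNIV"
    using summable_on_reindex by blast
  then have "summable (\<lambda>k. (norm (\<xi> (chain_vertex (Suc k))))\<^sup>2)"
    by (simp add: summable_on_UNIV_nonneg_real_iff[symmetric] o_def)
  then have "(\<lambda>k. sqrt ((norm (\<xi> (chain_vertex (Suc k))))\<^sup>2)) \<longlonglongrightarrow> sqrt 0"
    by (intro tendsto_real_sqrt summable_LIMSEQ_zero)
  then have "(\<lambda>k. chain_seq W \<xi> (Suc k)) \<longlonglongrightarrow> 0"
    by (simp add: tendsto_norm_zero_iff)
  then show ?thesis
    by (rule LIMSEQ_imp_Suc)
qed

lemma finite_support_in_Hbar:
  assumes "\<xi> \<in> Hcheck W" and "finite {c. \<xi> c \<noteq> 0}"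
  shows "\<xi> \<in> Hbar W"
proof -
  have "(\<lambda>c. (norm (\<xi> c))\<^sup>2) summable_on {c. \<xi> c \<noteq> 0}"
    using assms(2) by (rule summable_on_finite)
  then have "(\<lambda>c. (norm (\<xi> c))\<^sup>2) summable_on CW W"
    by (rule summable_on_cong_neutral[THEN iffD1, rotated -1])
      (use assms(1) in \<open>auto simp: Hcheck_def\<close>)
  with assms(1) show ?thesis
    by (simp add: Hbar_def)
qed

lemma Hbar_eig_subset:
  assumes "\<xi> \<in> Hbar_eig W l"
  shows "\<xi> \<in> (if W = D_half_inf \<and> l = 2 then cspan {gamma c0p - gamma c0m} else {0})"
proof -
  obtain a b x where \<xi>: "\<xi> = eigvec W (2 - l) a b x"
    and A: "W = A_half_inf \<longrightarrow> a = 0 \<and> b = 0"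
    and D: "W = D_half_inf \<longrightarrow> (2 - l) * a = x \<and> (2 - l) * b = x"
    using assms unfolding Hbar_eig_def Hcheck_eig_eq_eigvecs by blast
  define y where "y = lin_rec (2 - l) (a + b) x"
  have rec: "\<And>k. y (Suc (Suc k)) = (2 - l) * y (Suc k) - y k"
    by (simp add: y_def)
  have lim: "y \<longlonglongrightarrow> 0"
    using Hbar_chain_seq_tendsto_zero[of \<xi> W] assms
    by (simp add: Hbar_eig_def \<xi> chain_seq_eigvec[OF A] y_def)
  show ?thesis
  proof (cases W)
    case A_half_inf
    with A have "a = 0" "b = 0" by auto
    then have "x\<^sup>2 = 0"
      using recurrence_wronskian_zero[OF rec lim] by (simp add: y_def numeral_2_eq_2)
    then show ?thesis
      using \<xi> \<open>a = 0\<close> \<open>b = 0\<close> A_half_inf by simp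
  next
    case D_half_inf
    with D have "2 * y 1 = (2 - l) * y 0"
      by (simp add: y_def algebra_simps)
    then have "a + b = 0"
      using decaying_solution_start_zero[OF rec lim] by (simp add: y_def)
    then have "b = - a"
      by (simp add: add_eq_0_iff)
    moreover from D D_half_inf have "(2 - l) * a = x" "(2 - l) * b = x"
      by simp_all
    ultimately have "x = 0" "(2 - l) * a = 0"
      by simp_all
    then show ?thesis
      using \<xi> \<open>b = - a\<close> D_half_inf eigvec_branch[of a]
      by (cases "l = 2") (auto simp: cspan_singleton)
  qed
qed

lemma Hbar_eig_eq:
  "Hbar_eig W l = (if W = D_half_inf \<and> l = 2 then cspan {gamma c0p - gamma c0m} else {0})"
proof (intro equalityI subsetI)
  fix \<xi> assume "\<xi> \<in> (if W = D_half_inf \<and> l = 2 then cspan {gamma c0p - gamma c0m} else {0})"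
  then obtain a where \<xi>: "\<xi> = eigvec W (2 - l) a (- a) 0"
    and "\<not> (W = D_half_inf \<and> l = 2) \<Longrightarrow> a = 0"
    by (cases "W = D_half_inf \<and> l = 2") (auto simp: cspan_singleton eigvec_branch)
  then have "(W = A_half_inf \<longrightarrow> a = 0 \<and> - a = 0)
      \<and> (W = D_half_inf \<longrightarrow> (2 - l) * a = 0 \<and> (2 - l) * - a = 0)"
    by (cases W) auto
  then have "\<xi> \<in> Hcheck_eig W l"
    unfolding Hcheck_eig_eq_eigvecs \<xi> by blast
  moreover have "{c. \<xi> c \<noteq> 0} \<subseteq> {c0p, c0m}"
  proof
    fix c assume "c \<in> {c. \<xi> c \<noteq> 0}"
    then show "c \<in> {c0p, c0m}"
      by (cases c) (auto simp: \<xi> eigvec_def split: if_splits)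
  qed
  ultimately show "\<xi> \<in> Hbar_eig W l"
    unfolding Hbar_eig_def by (auto intro: finite_support_in_Hbar finite_subset simp: Hcheck_eig_def)
qed (rule Hbar_eig_subset)

lemma Hcheck_eig_eq_cspan_single:
  assumes "\<not> (W = D_half_inf \<and> l = 2)"
  obtains v where "v \<noteq> 0" and "Hcheck_eig W l = cspan {v}"
proof (cases W)
  case A_half_inf
  have "eigvec A_half_inf (2 - l) 0 0 1 (c1 1) \<noteq> 0"
    by (simp add: eigvec_def)
  then show ?thesis
    using that[of "eigvec A_half_inf (2 - l) 0 0 1"] A_half_inf Hcheck_eig_A by force
next
  case D_half_inf
  have "eigvec D_half_inf (2 - l) (1 / (2 - l)) (1 / (2 - l)) 1 (c1 1) \<noteq> 0"
    by (simp add: eigvec_def)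
  then show ?thesis
    using that[of "eigvec D_half_inf (2 - l) (1 / (2 - l)) (1 / (2 - l)) 1"]
      D_half_inf assms Hcheck_eig_D
    by force
qed

lemma independent_D_2_basis:
  "V.independent {eigvec D_half_inf 0 1 0 0, eigvec D_half_inf 0 0 1 0}"
proof (rule V.independent_insertI)
  show "eigvec D_half_inf 0 1 0 0 \<notin> V.span {eigvec D_half_inf 0 0 1 0}"
  proof
    assume "eigvec D_half_inf 0 1 0 0 \<in> V.span {eigvec D_half_inf 0 0 1 0}"
    then obtain t where "eigvec D_half_inf 0 1 0 0 = cscale t (eigvec D_half_inf 0 0 1 0)"
      by (auto simp: V.span_singleton)
    then have "eigvec D_half_inf 0 1 0 0 c0p = t * eigvec D_half_inf 0 0 1 0 c0p"
      by (simp add: cscale_def)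
    then show False
      by (simp add: eigvec_def)
  qed
  have "eigvec D_half_inf 0 0 1 0 c0m \<noteq> 0"
    by (simp add: eigvec_def)
  then show "V.independent {eigvec D_half_inf 0 0 1 0}"
    by auto
qed

theorem mainTheorem9:
  fixes W :: wtype and l :: complex
  shows "(\<not> (W = D_half_inf \<and> l = 2) \<longrightarrow>
            cdim (Hcheck_eig W l) = 1 \<and> cdim (Hbar_eig W l) = 0)
       \<and> (W = D_half_inf \<and> l = 2 \<longrightarrow>
            cdim (Hcheck_eig W 2) = 2 \<and> cdim (Hbar_eig W 2) = 1 \<and>
            Hbar_eig W 2 = cspan {gamma c0p - gamma c0m})"
proof (cases "W = D_half_inf \<and> l = 2")
  case False
  then obtain v where "v \<noteq> 0" and "Hcheck_eig W l = cspan {v}"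
    by (rule Hcheck_eig_eq_cspan_single)
  then have "cdim (Hcheck_eig W l) = 1"
    by (simp add: cdim_cspan_independent)
  moreover have "Hbar_eig W l = cspan {}"
    unfolding Hbar_eig_eq if_not_P[OF False] by (simp add: cspan_def)
  then have "cdim (Hbar_eig W l) = 0"
    by (simp add: cdim_cspan_independent V.independent_empty)
  ultimately show ?thesis
    using False by blast
next
  case True
  have "gamma c0p - gamma c0m \<noteq> 0"
    by (auto simp: fun_eq_iff gamma_def)
  moreover have "eigvec D_half_inf 0 1 0 0 \<noteq> eigvec D_half_inf 0 0 1 0"
    by (auto simp: fun_eq_iff eigvec_def intro!: exI[of _ c0p])
  ultimately show ?thesis
    using True independent_D_2_basis
    by (simp add: Hbar_eig_eq Hcheck_eig_D_2 cdim_cspan_independent)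
qed

end
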